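(* $\mathrm{GenMem}(\mathrm{RL}) = 2$.
   Context: Let $\Omega=\mathbb{N}\times\{0,1\}$ with partial order $(n,a)\preceq(m,b)$ iff $(n,a)=(m,b)$ or $n<m$. Let $\mathbb{M}$ be the set of all functions $f\colon\Omega\to\Omega$ monotone w.r.t. $\preceq$. The Rope Ladder condition $\mathrm{RL}\subseteq\mathbb{M}^\omega$ (a winning condition over the color set $\mathbb{M}$) consists of all sequences $(f_1,f_2,\ldots)\in\mathbb{M}^\omega$ for which there is $(N,b)\in\Omega$ with $f_n\circ\cdots\circ f_1((0,0))\preceq(N,b)$ for all $n\ge1$. An arena over a color set $C$ is a tuple $\langle V_P, V_A, E\rangle$ of finite sets with $V_P\cap V_A=\varnothing$, $V=V_P\cup V_A\neq\varnothing$, $E\subseteq V\times C\times V$, every node having an outgoing edge. Paths are non-empty finite/infinite sequences of consecutive edges, plus $0$-length paths $\lambda_v$ at each node. A Protagonist's strategy maps each finite path ending in $V_P$ to an outgoing edge of its last node; a path is consistent with $S$ if every edge leaving a Protagonist node along it is the one chosen by $S$ on the preceding prefix. $S$ is winning from $u$ w.r.t. $W\subseteq C^\omega$ if every infinite path consistent with $S$ from $u$ has color sequence in $W$; $S$ is optimal w.r.t. $W$ if there is no node from which some strategy wins w.r.t. $W$ but $S$ does not. A (general) memory structure is $\langle M,m_{init},\delta\rangle$ with $M$ finite, $m_{init}\in M$, $\delta\colon M\times E\to M$ (extended to finite edge sequences by iteration). A strategy $S$ is built on top of it if $S(p_1)=S(p_2)$ whenever $p_1,p_2$ end at the same Protagonist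 node and $\delta(m_{init},p_1)=\delta(m_{init},p_2)$; with $k$ memory states this is a strategy with $k$ states of general memory. $\mathrm{GenMem}(W)$ is the least $k\in\mathbb{Z}^+$ such that every arena over $C$ admits a Protagonist's strategy with $k$ states of general memory that is optimal w.r.t. $W$ ($+\infty$ if none exists). *)

theory Defs
  imports Main "HOL-Library.Extended_Nat"
begin

type_synonym omega = "nat \<times> bool"   (* (n,False) = (n,0), (n,True) = (n,1) *)

definition omega_le :: "omega \<Rightarrow> omega \<Rightarrow> bool" where
  "omega_le x y \<longleftrightarrow> x = y \<or> fst x < fst y"

definition monoM :: "(omega \<Rightarrow> omega) set" where
  "monoM = {f. \<forall>x y. omega_le x y \<longrightarrow> omega_le (f x) (f y)}"

(* comp_pref fs n x = f_n o ... o f_1 x, where f_i = fs (i-1) *)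
fun comp_pref :: "(nat \<Rightarrow> ('a \<Rightarrow> 'a)) \<Rightarrow> nat \<Rightarrow> 'a \<Rightarrow> 'a" where
  "comp_pref fs 0 x = x"
| "comp_pref fs (Suc n) x = fs n (comp_pref fs n x)"

definition RL :: "(nat \<Rightarrow> (omega \<Rightarrow> omega)) set" where
  "RL = {fs. (\<forall>i. fs i \<in> monoM) \<and>
             (\<exists>N b. \<forall>n\<ge>1. omega_le (comp_pref fs n (0, False)) (N, b))}"

type_synonym 'c edge = "nat \<times> 'c \<times> nat"
type_synonym 'c arena = "nat set \<times> nat set \<times> 'c edge set"

definition src :: "'c edge \<Rightarrow> nat" where "src e = fst e"
definition tgt :: "'c edge \<Rightarrow> nat" where "tgt e = snd (snd e)"
definition col :: "'c edge \<Rightarrow> 'c" where "col e = fst (snd e)"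

definition VP :: "'c arena \<Rightarrow> nat set" where "VP A = fst A"
definition VA :: "'c arena \<Rightarrow> nat set" where "VA A = fst (snd A)"
definition Ed :: "'c arena \<Rightarrow> 'c edge set" where "Ed A = snd (snd A)"
definition Vs :: "'c arena \<Rightarrow> nat set" where "Vs A = VP A \<union> VA A"

definition is_arena :: "'c set \<Rightarrow> 'c arena \<Rightarrow> bool" where
  "is_arena C A \<longleftrightarrow> finite (VP A) \<and> finite (VA A) \<and> finite (Ed A) \<and>
     VP A \<inter> VA A = {} \<and> Vs A \<noteq> {} \<and>
     Ed A \<subseteq> Vs A \<times> C \<times> Vs A \<and>
     (\<forall>v\<in>Vs A. \<exists>e\<in>Ed A. src e = v)"

fun chain_from :: "nat \<Rightarrow> 'c edge list \<Rightarrow> bool" where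
  "chain_from v [] = True"
| "chain_from v (e # es) = (src e = v \<and> chain_from (tgt e) es)"

(* finite path: start node v and edge list es (es = [] is the 0-length path lambda_v) *)
definition fpath :: "'c arena \<Rightarrow> nat \<Rightarrow> 'c edge list \<Rightarrow> bool" where
  "fpath A v es \<longleftrightarrow> v \<in> Vs A \<and> set es \<subseteq> Ed A \<and> chain_from v es"

definition last_node :: "nat \<Rightarrow> 'c edge list \<Rightarrow> nat" where
  "last_node v es = (if es = [] then v else tgt (last es))"

definition ipath :: "'c arena \<Rightarrow> nat \<Rightarrow> (nat \<Rightarrow> 'c edge) \<Rightarrow> bool" where
  "ipath A u p \<longleftrightarrow> (\<forall>i. p i \<in> Ed A) \<and> src (p 0) = u \<and> (\<forall>i. tgt (p i) = src (p (Suc i)))"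

type_synonym 'c strategy = "nat \<Rightarrow> 'c edge list \<Rightarrow> 'c edge"

definition is_strategy :: "'c arena \<Rightarrow> 'c strategy \<Rightarrow> bool" where
  "is_strategy A S \<longleftrightarrow> (\<forall>v es. fpath A v es \<and> last_node v es \<in> VP A \<longrightarrow>
       S v es \<in> Ed A \<and> src (S v es) = last_node v es)"

definition consistent :: "'c arena \<Rightarrow> 'c strategy \<Rightarrow> nat \<Rightarrow> (nat \<Rightarrow> 'c edge) \<Rightarrow> bool" where
  "consistent A S u p \<longleftrightarrow> (\<forall>i. src (p i) \<in> VP A \<longrightarrow> p i = S u (map p [0..<i]))"

definition winning_from :: "'c arena \<Rightarrow> (nat \<Rightarrow> 'c) set \<Rightarrow> 'c strategy \<Rightarrow> nat \<Rightarrow> bool" where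
  "winning_from A W S u \<longleftrightarrow>
     (\<forall>p. ipath A u p \<and> consistent A S u p \<longrightarrow> (\<lambda>i. col (p i)) \<in> W)"

definition optimal :: "'c arena \<Rightarrow> (nat \<Rightarrow> 'c) set \<Rightarrow> 'c strategy \<Rightarrow> bool" where
  "optimal A W S \<longleftrightarrow> \<not> (\<exists>u\<in>Vs A. (\<exists>S'. is_strategy A S' \<and> winning_from A W S' u)
                                  \<and> \<not> winning_from A W S u)"

definition memory_structure :: "'c arena \<Rightarrow> nat \<Rightarrow> nat \<Rightarrow> (nat \<Rightarrow> 'c edge \<Rightarrow> nat) \<Rightarrow> bool" where
  "memory_structure A k m0 \<delta> \<longleftrightarrow> m0 < k \<and> (\<forall>m<k. \<forall>e\<in>Ed A. \<delta> m e < k)"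

definition built_on :: "'c arena \<Rightarrow> nat \<Rightarrow> (nat \<Rightarrow> 'c edge \<Rightarrow> nat) \<Rightarrow> 'c strategy \<Rightarrow> bool" where
  "built_on A m0 \<delta> S \<longleftrightarrow>
     (\<forall>v1 es1 v2 es2. fpath A v1 es1 \<and> fpath A v2 es2 \<and>
        last_node v1 es1 = last_node v2 es2 \<and> last_node v1 es1 \<in> VP A \<and>
        foldl \<delta> m0 es1 = foldl \<delta> m0 es2 \<longrightarrow> S v1 es1 = S v2 es2)"

definition has_mem_optimal :: "'c set \<Rightarrow> (nat \<Rightarrow> 'c) set \<Rightarrow> nat \<Rightarrow> bool" where
  "has_mem_optimal C W k \<longleftrightarrow>
     (\<forall>A. is_arena C A \<longrightarrow>
        (\<exists>m0 \<delta> S. memory_structure A k m0 \<delta> \<and> is_strategy A S \<and>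
                  built_on A m0 \<delta> S \<and> optimal A W S))"

definition GenMem :: "'c set \<Rightarrow> (nat \<Rightarrow> 'c) set \<Rightarrow> enat" where
  "GenMem C W = (if \<exists>k\<ge>1. has_mem_optimal C W k
                 then enat (LEAST k. k \<ge> 1 \<and> has_mem_optimal C W k) else \<infinity>)"

end

theory Submission
  imports Defs "HOL-Library.Sublist"
begin

text \<open>
Read (n, b) \<in> \<Omega> as rung n of a ladder, carrying the bit b; a sequence of monotone
colours is in RL iff the rung stays bounded along it.

Two memory states suffice.  If Protagonist wins RL from u with some strategy, she also wins
the safety game ``the rung stays \<le> B'' from (u, (0, 0)) for some B: otherwise Antagonist can
force, against the fixed strategy, the play from one unbounded state to another one above any
given rung (an attractor argument, which needs the finiteness of the arena), and repeating
this yields a consistent play with unbounded rungs.  As the arena is finite, B can be chosen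
uniformly.  To win the safety game Protagonist remembers only the bit b of an imagined
position: the highest safe element of \<Omega> with bit b at the current node.  It dominates the
real position; moving both along the same edge preserves this by monotonicity, and raising the
imagined one again to the highest safe element with its new bit keeps it (elements of \<Omega>
with equal bits are ordered by their rungs).

One memory state does not suffice.  In an arena where Antagonist writes a bit and Protagonist
then guesses it, a wrong guess costing one rung, copying the bit wins, but a memoryless
strategy always guesses the same bit and loses when Antagonist keeps writing the other one.
\<close>

lemma omega_le_trans: "omega_le x y \<Longrightarrow> omega_le y z \<Longrightarrow> omega_le x z"
  by (auto simp: omega_le_def)

lemma omega_le_fst: "omega_le x y \<Longrightarrow> fst x \<le> fst y"
  by (auto simp: omega_le_def)

lemma monoM_D: "f \<in> monoM \<Longrightarrow> omega_le x y \<Longrightarrow> omega_le (f x) (f y)"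
  unfolding monoM_def by blast

lemma RL_iff_bounded:
  "fs \<in> RL \<longleftrightarrow> (\<forall>i. fs i \<in> monoM) \<and> (\<exists>N. \<forall>n. fst (comp_pref fs n (0, False)) \<le> N)"
proof -
  have "(\<exists>N b. \<forall>n\<ge>1. omega_le (comp_pref fs n (0, False)) (N, b)) \<longleftrightarrow>
        (\<exists>N. \<forall>n. fst (comp_pref fs n (0, False)) \<le> N)"
  proof
    assume "\<exists>N b. \<forall>n\<ge>1. omega_le (comp_pref fs n (0, False)) (N, b)"
    then obtain N b where N: "\<forall>n\<ge>1. omega_le (comp_pref fs n (0, False)) (N, b)" by blast
    have "fst (comp_pref fs n (0, False)) \<le> N" for n
      using N[rule_format, of n] by (cases "n = 0") (auto simp: omega_le_def)
    then show "\<exists>N. \<forall>n. fst (comp_pref fs n (0, False)) \<le> N" by blast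
  next
    assume "\<exists>N. \<forall>n. fst (comp_pref fs n (0, False)) \<le> N"
    then obtain N where N: "\<forall>n. fst (comp_pref fs n (0, False)) \<le> N" by blast
    have "omega_le (comp_pref fs n (0, False)) (Suc N, False)" for n
      using N[rule_format, of n] by (simp add: omega_le_def)
    then show "\<exists>N b. \<forall>n\<ge>1. omega_le (comp_pref fs n (0, False)) (N, b)" by blast
  qed
  then show ?thesis by (simp add: RL_def)
qed

lemma strict_prefix_chain_limit:
  assumes chain: "\<And>k. strict_prefix (H k) (H (Suc k))"
  obtains p where "\<And>k. H k = map p [0..<length (H k)]" and "\<And>k. k \<le> length (H k)"
proof
  have mono: "prefix (H k) (H j)" if "k \<le> j" for k j
    using that by (rule transitive_stepwise_le)
      (use chain prefix_order.trans prefix_order.less_imp_le in blast)+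
  show long: "k \<le> length (H k)" for k
  proof (induction k)
    case (Suc k)
    then show ?case using prefix_length_less[OF chain[of k]] by simp
  qed simp
  define p where "p i = H (Suc i) ! i" for i
  have "H k ! i = p i" if "i < length (H k)" for k i
  proof (cases "Suc i \<le> k")
    case True
    then obtain zs where "H k = H (Suc i) @ zs" using mono by (auto simp: prefix_def)
    then show ?thesis using long[of "Suc i"] by (simp add: p_def nth_append)
  next
    case False
    then show ?thesis using mono[of k "Suc i"] that by (auto simp: p_def prefix_def nth_append)
  qed
  then show "H k = map p [0..<length (H k)]" for k
    by (intro nth_equalityI) auto
qed

lemma last_node_Nil [simp]: "last_node v [] = v"
  by (simp add: last_node_def)

lemma last_node_snoc [simp]: "last_node v (es @ [e]) = tgt e"
  by (simp add: last_node_def)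

lemma chain_from_append [simp]:
  "chain_from v (es @ fs) \<longleftrightarrow> chain_from v es \<and> chain_from (last_node v es) fs"
  by (induction es arbitrary: v) (auto simp: last_node_def)

lemma arena_edge:
  "is_arena C A \<Longrightarrow> e \<in> Ed A \<Longrightarrow> src e \<in> Vs A \<and> tgt e \<in> Vs A \<and> col e \<in> C"
  by (auto simp: is_arena_def src_def tgt_def col_def)

lemma fpath_last_node:
  "is_arena C A \<Longrightarrow> fpath A v es \<Longrightarrow> last_node v es \<in> Vs A"
  by (cases es rule: rev_cases) (auto simp: fpath_def dest: arena_edge)

lemma ipath_prefix:
  assumes "is_arena C A" "ipath A u p"
  shows "fpath A u (map p [0..<i]) \<and> last_node u (map p [0..<i]) = src (p i)"
  using assms arena_edge[OF assms(1), of "p 0"] by (induction i) (auto simp: ipath_def fpath_def)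

definition ladder_pos :: "(omega \<Rightarrow> omega) edge list \<Rightarrow> omega" where
  "ladder_pos es = foldl (\<lambda>x e. col e x) (0, False) es"

lemma ladder_pos_snoc [simp]: "ladder_pos (es @ [e]) = col e (ladder_pos es)"
  by (simp add: ladder_pos_def)

lemma comp_pref_eq_ladder_pos:
  "comp_pref (\<lambda>i. col (p i)) n (0, False) = ladder_pos (map p [0..<n])"
  by (induction n) (auto simp: ladder_pos_def)

definition history :: "'c arena \<Rightarrow> 'c strategy \<Rightarrow> nat \<Rightarrow> 'c edge list \<Rightarrow> bool" where
  "history A S u es \<longleftrightarrow>
     fpath A u es \<and> (\<forall>i<length es. src (es ! i) \<in> VP A \<longrightarrow> es ! i = S u (take i es))"

lemma history_snoc:
  assumes "history A S u es" "e \<in> Ed A" "src e = last_node u es" "src e \<in> VP A \<Longrightarrow> e = S u es"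
  shows "history A S u (es @ [e])"
  using assms unfolding history_def fpath_def by (auto simp: nth_append)

lemma history_appendD:
  assumes "history A S u (es @ fs)"
  shows "history A S u es"
  unfolding history_def
proof (intro conjI allI impI)
  show "fpath A u es" using assms by (simp add: history_def fpath_def)
  fix i assume "i < length es" "src (es ! i) \<in> VP A"
  then show "es ! i = S u (take i es)"
    using assms unfolding history_def by (auto dest!: spec[of _ i] simp: nth_append)
qed

lemma history_prefixes_imp_play:
  assumes hist: "\<And>n. history A S u (map p [0..<n])"
  shows "ipath A u p \<and> consistent A S u p"
  unfolding ipath_def consistent_def
proof (intro conjI allI impI)
  fix i
  have fp: "fpath A u (map p [0..<i] @ [p i, p (Suc i)])"
    using hist[of "Suc (Suc i)"] by (simp add: history_def)
  then show "p i \<in> Ed A" and "tgt (p i) = src (p (Suc i))"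
    by (auto simp: fpath_def)
  show "src (p i) \<in> VP A \<Longrightarrow> p i = S u (map p [0..<i])"
    using hist[of "Suc i"] unfolding history_def by (auto dest!: spec[of _ i] simp: nth_append)
next
  show "src (p 0) = u"
    using hist[of 1] by (simp add: history_def fpath_def)
qed

section \<open>Safety games on arenas with monotone colours\<close>

locale monotone_arena =
  fixes A :: "(omega \<Rightarrow> omega) arena"
  assumes arena: "is_arena monoM A"
begin

lemma edge_props: "e \<in> Ed A \<Longrightarrow> src e \<in> Vs A \<and> tgt e \<in> Vs A \<and> col e \<in> monoM"
  using arena_edge[OF arena] .

definition safe :: "nat \<Rightarrow> (nat \<times> omega) set \<Rightarrow> bool" where
  "safe B Z \<longleftrightarrow> (\<forall>v x. (v, x) \<in> Z \<longrightarrow> v \<in> Vs A \<and> fst x \<le> B \<and>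
     (v \<in> VP A \<longrightarrow> (\<exists>e\<in>Ed A. src e = v \<and> (tgt e, col e x) \<in> Z)) \<and>
     (v \<in> VA A \<longrightarrow> (\<forall>e\<in>Ed A. src e = v \<longrightarrow> (tgt e, col e x) \<in> Z)))"

definition Safe :: "nat \<Rightarrow> (nat \<times> omega) set" where
  "Safe B = \<Union>{Z. safe B Z}"

definition Bounded :: "(nat \<times> omega) set" where
  "Bounded = (\<Union>B. Safe B)"

lemma safe_subset_Safe: "safe B Z \<Longrightarrow> Z \<subseteq> Safe B"
  by (auto simp: Safe_def)

lemma safe_Safe: "safe B (Safe B)"
  unfolding safe_def
proof (intro allI impI)
  fix v x assume "(v, x) \<in> Safe B"
  then obtain Z where "safe B Z" "(v, x) \<in> Z" by (auto simp: Safe_def)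
  with safe_subset_Safe[OF this(1)] show "v \<in> Vs A \<and> fst x \<le> B \<and>
     (v \<in> VP A \<longrightarrow> (\<exists>e\<in>Ed A. src e = v \<and> (tgt e, col e x) \<in> Safe B)) \<and>
     (v \<in> VA A \<longrightarrow> (\<forall>e\<in>Ed A. src e = v \<longrightarrow> (tgt e, col e x) \<in> Safe B))"
    unfolding safe_def by blast
qed

lemma safe_mono: "safe B Z \<Longrightarrow> B \<le> B' \<Longrightarrow> safe B' Z"
  unfolding safe_def by fastforce

lemma Safe_mono: "B \<le> B' \<Longrightarrow> Safe B \<subseteq> Safe B'"
  using safe_Safe safe_mono safe_subset_Safe by blast

lemma Safe_bound: "(v, x) \<in> Safe B \<Longrightarrow> v \<in> Vs A \<and> fst x \<le> B"
  using safe_Safe[of B] unfolding safe_def by blast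

lemma finite_subset_Bounded:
  assumes "finite F" "F \<subseteq> Bounded"
  obtains B where "F \<subseteq> Safe B"
proof -
  have "Safe i \<subseteq> Safe j \<or> Safe j \<subseteq> Safe i" for i j
    using nat_le_linear Safe_mono by blast
  then have "subset.chain UNIV (range Safe)"
    by (auto simp: subset.chain_def)
  moreover have "F \<subseteq> \<Union>(range Safe)" using assms(2) by (simp add: Bounded_def)
  ultimately show thesis
    using finite_subset_Union_chain[OF assms(1)] that by blast
qed

inductive_set Escape :: "nat \<Rightarrow> (nat \<times> omega) set" for B where
  reached: "v \<in> Vs A \<Longrightarrow> (v, x) \<notin> Bounded \<Longrightarrow> B < fst x \<Longrightarrow> (v, x) \<in> Escape B"
| antagonist: "v \<in> VA A \<Longrightarrow> e \<in> Ed A \<Longrightarrow> src e = v \<Longrightarrow> (tgt e, col e x) \<in> Escape B \<Longrightarrow>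
    (v, x) \<in> Escape B"
| protagonist: "v \<in> VP A \<Longrightarrow> \<forall>e\<in>Ed A. src e = v \<longrightarrow> (tgt e, col e x) \<in> Escape B \<Longrightarrow>
    (v, x) \<in> Escape B"

lemma Bounded_successors_uniformly_Safe:
  obtains B' where "\<And>e y. e \<in> Ed A \<Longrightarrow> fst y \<le> B \<Longrightarrow> (tgt e, col e y) \<in> Bounded \<Longrightarrow>
    (tgt e, col e y) \<in> Safe B'"
proof -
  define F where "F = (\<lambda>(e, y). (tgt e, col e y)) ` (Ed A \<times> ({..B} \<times> UNIV))"
  have "finite (Ed A)" using arena by (simp add: is_arena_def)
  then have "finite (F \<inter> Bounded)" by (simp add: F_def)
  then obtain B' where B': "F \<inter> Bounded \<subseteq> Safe B'"
    using finite_subset_Bounded by blast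
  have "(tgt e, col e y) \<in> F" if "e \<in> Ed A" "fst y \<le> B" for e y
    using that unfolding F_def by (intro image_eqI[of _ _ "(e, y)"]) (auto simp: mem_Times_iff)
  then show thesis using B' that by blast
qed

text \<open>Otherwise the states at rung \<le> B outside the attractor Escape B, together with
  Safe B' for a large B', would form a safe set.\<close>

lemma not_Bounded_imp_Escape:
  assumes v: "v \<in> Vs A" and unbounded: "(v, x) \<notin> Bounded"
  shows "(v, x) \<in> Escape B"
proof (rule ccontr)
  assume not_escape: "(v, x) \<notin> Escape B"
  obtain B' where B': "\<And>e y. e \<in> Ed A \<Longrightarrow> fst y \<le> B \<Longrightarrow> (tgt e, col e y) \<in> Bounded \<Longrightarrow>
      (tgt e, col e y) \<in> Safe B'"
    using Bounded_successors_uniformly_Safe by blast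
  define B2 where "B2 = max B B'"
  define Z where "Z = {(w, y). w \<in> Vs A \<and> (w, y) \<notin> Escape B \<and> fst y \<le> B} \<union> Safe B2"
  have succ: "(tgt e, col e y) \<in> Z"
    if "e \<in> Ed A" "fst y \<le> B" "(tgt e, col e y) \<notin> Escape B" for e y
  proof (cases "fst (col e y) \<le> B")
    case True
    then show ?thesis using that edge_props[of e] by (auto simp: Z_def)
  next
    case False
    then have "(tgt e, col e y) \<in> Bounded"
      using that edge_props[of e] Escape.reached[where v = "tgt e" and x = "col e y" and B = B] by auto
    then show ?thesis
      using B'[OF that(1,2)] Safe_mono[of B' B2] by (auto simp: Z_def B2_def)
  qed
  have "safe B2 Z"
    unfolding safe_def
  proof (intro allI impI)
    fix w y assume wy: "(w, y) \<in> Z"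
    show "w \<in> Vs A \<and> fst y \<le> B2 \<and>
      (w \<in> VP A \<longrightarrow> (\<exists>e\<in>Ed A. src e = w \<and> (tgt e, col e y) \<in> Z)) \<and>
      (w \<in> VA A \<longrightarrow> (\<forall>e\<in>Ed A. src e = w \<longrightarrow> (tgt e, col e y) \<in> Z))"
    proof (cases "(w, y) \<in> Safe B2")
      case True
      then show ?thesis using safe_Safe[of B2] unfolding safe_def Z_def by blast
    next
      case False
      with wy have w: "w \<in> Vs A" "(w, y) \<notin> Escape B" "fst y \<le> B" by (auto simp: Z_def)
      moreover have "fst y \<le> B2" using w(3) by (simp add: B2_def)
      ultimately show ?thesis
        using succ Escape.protagonist[where v = w and x = y and B = B]
          Escape.antagonist[where v = w and x = y and B = B]
        by blast
    qed
  qed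
  moreover have "fst x \<le> B"
    using Escape.reached[OF v unbounded, of B] not_escape by (meson not_le)
  then have "(v, x) \<in> Z"
    using v not_escape by (simp add: Z_def)
  ultimately show False
    using unbounded safe_subset_Safe by (auto simp: Bounded_def)
qed

lemma Escape_extends_history:
  assumes strat: "is_strategy A S"
  shows "(v, x) \<in> Escape B \<Longrightarrow> history A S u es \<Longrightarrow> last_node u es = v \<Longrightarrow>
    ladder_pos es = x \<Longrightarrow> \<exists>t. history A S u (es @ t) \<and>
      (last_node u (es @ t), ladder_pos (es @ t)) \<notin> Bounded \<and> B < fst (ladder_pos (es @ t))"
proof (induction arbitrary: es rule: Escape.induct)
  case (reached v x)
  then show ?case by (intro exI[of _ "[]"]) auto
next
  case (antagonist v e x)
  have "src e \<notin> VP A" using antagonist.hyps arena by (auto simp: is_arena_def)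
  then have "history A S u (es @ [e])"
    using antagonist by (intro history_snoc) auto
  then show ?case using antagonist.IH[of "es @ [e]"] antagonist.prems by fastforce
next
  case (protagonist v x)
  define e where "e = S u es"
  have "e \<in> Ed A" "src e = v"
    using strat protagonist unfolding is_strategy_def history_def e_def by auto
  moreover from this have "history A S u (es @ [e])"
    using protagonist by (intro history_snoc) (auto simp: e_def)
  ultimately show ?case using protagonist.IH protagonist.prems by fastforce
qed

lemma unbounded_history_extends:
  assumes "is_strategy A S" "history A S u h" "(last_node u h, ladder_pos h) \<notin> Bounded"
  obtains h' where "strict_prefix h h'" "history A S u h'"
    "(last_node u h', ladder_pos h') \<notin> Bounded" "k < fst (ladder_pos h')"
proof -
  have "last_node u h \<in> Vs A"
    using assms(2) fpath_last_node[OF arena] by (auto simp: history_def)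
  then have "(last_node u h, ladder_pos h) \<in> Escape (max k (fst (ladder_pos h)))"
    using not_Bounded_imp_Escape assms(3) by blast
  from Escape_extends_history[OF assms(1) this assms(2)] obtain t where
    "history A S u (h @ t)" "(last_node u (h @ t), ladder_pos (h @ t)) \<notin> Bounded"
    "max k (fst (ladder_pos h)) < fst (ladder_pos (h @ t))"
    by blast
  moreover from this have "t \<noteq> []" by auto
  ultimately show thesis using that[of "h @ t"] by (auto simp: strict_prefix_def)
qed

lemma unbounded_consistent_play:
  assumes strat: "is_strategy A S" and u: "u \<in> Vs A" and "(u, (0, False)) \<notin> Bounded"
  obtains p where "ipath A u p" "consistent A S u p"
    "\<And>N. \<exists>n. N < fst (ladder_pos (map p [0..<n]))"
proof -
  define unbounded where
    "unbounded h \<longleftrightarrow> history A S u h \<and> (last_node u h, ladder_pos h) \<notin> Bounded" for h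
  have start: "\<exists>h. unbounded h"
    using assms(2,3) by (intro exI[of _ "[]"]) (simp add: unbounded_def history_def fpath_def ladder_pos_def)
  have step: "\<exists>h'. unbounded h' \<and> strict_prefix h h' \<and> k < fst (ladder_pos h')"
    if h: "unbounded h" for h k
  proof -
    obtain h' where "strict_prefix h h'" "history A S u h'"
      "(last_node u h', ladder_pos h') \<notin> Bounded" "k < fst (ladder_pos h')"
      using unbounded_history_extends[OF strat, of u h k] h unfolding unbounded_def by blast
    then show ?thesis unfolding unbounded_def by blast
  qed
  obtain H where H: "\<And>k. unbounded (H k)" "\<And>k. strict_prefix (H k) (H (Suc k))"
    "\<And>k. k < fst (ladder_pos (H (Suc k)))"
    using dependent_nat_choice[where P = "\<lambda>_. unbounded"
        and Q = "\<lambda>k h h'. strict_prefix h h' \<and> k < fst (ladder_pos h')", OF start step]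
    by metis
  obtain p where p: "\<And>k. H k = map p [0..<length (H k)]" and long: "\<And>k. k \<le> length (H k)"
    using strict_prefix_chain_limit[of H] H(2) by blast
  have "take n (H n) = map p [0..<n]" for n
    using arg_cong[of _ _ "take n", OF p[of n]] long[of n] by (simp add: take_map)
  moreover have "history A S u (take n (H n))" for n
    using H(1)[of n] history_appendD[of A S u "take n (H n)" "drop n (H n)"]
    by (simp add: unbounded_def)
  ultimately have "history A S u (map p [0..<n])" for n
    by simp
  then have "ipath A u p \<and> consistent A S u p"
    by (rule history_prefixes_imp_play)
  moreover have "N < fst (ladder_pos (map p [0..<length (H (Suc N))]))" for N
    using H(3)[of N] arg_cong[of _ _ ladder_pos, OF p[of "Suc N"]] by simp
  ultimately show thesis using that by blast
qed

lemma winning_imp_Bounded: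
  assumes strat: "is_strategy A S" and win: "winning_from A RL S u" and u: "u \<in> Vs A"
  shows "(u, (0, False)) \<in> Bounded"
proof (rule ccontr)
  assume "(u, (0, False)) \<notin> Bounded"
  then obtain p where play: "ipath A u p" "consistent A S u p"
    and unbounded: "\<And>N. \<exists>n. N < fst (ladder_pos (map p [0..<n]))"
    using unbounded_consistent_play[OF strat u] by blast
  have "(\<lambda>i. col (p i)) \<in> RL"
    using win play by (simp add: winning_from_def)
  then obtain N where "fst (ladder_pos (map p [0..<n])) \<le> N" for n
    by (auto simp: RL_iff_bounded comp_pref_eq_ladder_pos)
  then show False
    using unbounded[of N] by (meson not_le)
qed

lemma uniform_Safe_bound:
  obtains B where "\<And>u S. u \<in> Vs A \<Longrightarrow> is_strategy A S \<Longrightarrow> winning_from A RL S u \<Longrightarrow>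
    (u, (0, False)) \<in> Safe B"
proof -
  define W where "W = {u \<in> Vs A. \<exists>S. is_strategy A S \<and> winning_from A RL S u}"
  have "finite (Vs A)" using arena by (simp add: is_arena_def Vs_def)
  then have "finite ((\<lambda>u. (u, (0, False))) ` W)" by (simp add: W_def)
  moreover have "(\<lambda>u. (u, (0, False))) ` W \<subseteq> Bounded"
    using winning_imp_Bounded by (auto simp: W_def)
  ultimately obtain B where "(\<lambda>u. (u, (0, False))) ` W \<subseteq> Safe B"
    by (rule finite_subset_Bounded)
  then show thesis by (intro that) (auto simp: W_def)
qed

section \<open>Two memory states suffice\<close>

text \<open>Max {} is unspecified; top_rung B v b only matters when some (v, (n, b)) is in Safe B.\<close>

definition top_rung :: "nat \<Rightarrow> nat \<Rightarrow> bool \<Rightarrow> omega" where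
  "top_rung B v b = (Max {n. (v, (n, b)) \<in> Safe B}, b)"

lemma top_rung_dominates:
  assumes "(v, (n, b)) \<in> Safe B"
  shows "(v, top_rung B v b) \<in> Safe B \<and> omega_le (n, b) (top_rung B v b)"
proof -
  define N where "N = {n. (v, (n, b)) \<in> Safe B}"
  have "finite N"
    by (rule finite_subset[of _ "{..B}"]) (auto simp: N_def dest: Safe_bound)
  moreover have "n \<in> N" using assms by (simp add: N_def)
  ultimately have "Max N \<in> N" and "n \<le> Max N"
    by (auto intro: Max_in Max_ge)
  then show ?thesis by (auto simp: top_rung_def omega_le_def N_def)
qed

definition safe_move :: "nat \<Rightarrow> nat \<Rightarrow> bool \<Rightarrow> (omega \<Rightarrow> omega) edge" where
  "safe_move B v b =
    (if \<exists>e\<in>Ed A. src e = v \<and> (tgt e, col e (top_rung B v b)) \<in> Safe B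
     then SOME e. e \<in> Ed A \<and> src e = v \<and> (tgt e, col e (top_rung B v b)) \<in> Safe B
     else SOME e. e \<in> Ed A \<and> src e = v)"

lemma safe_move_edge:
  assumes "v \<in> Vs A"
  shows "safe_move B v b \<in> Ed A \<and> src (safe_move B v b) = v"
proof -
  have "\<exists>e. e \<in> Ed A \<and> src e = v" using arena assms unfolding is_arena_def by blast
  then show ?thesis
    unfolding safe_move_def
    using someI_ex[of "\<lambda>e. e \<in> Ed A \<and> src e = v \<and> (tgt e, col e (top_rung B v b)) \<in> Safe B"]
      someI_ex[of "\<lambda>e. e \<in> Ed A \<and> src e = v"]
    by auto
qed

lemma safe_move_Safe:
  assumes "v \<in> VP A" "(v, top_rung B v b) \<in> Safe B"
  shows "(tgt (safe_move B v b), col (safe_move B v b) (top_rung B v b)) \<in> Safe B"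
proof -
  have "\<exists>e\<in>Ed A. src e = v \<and> (tgt e, col e (top_rung B v b)) \<in> Safe B"
    using safe_Safe[of B] assms unfolding safe_def by blast
  then show ?thesis
    unfolding safe_move_def
    using someI_ex[of "\<lambda>e. e \<in> Ed A \<and> src e = v \<and> (tgt e, col e (top_rung B v b)) \<in> Safe B"]
    by auto
qed

text \<open>Memory state m stands for the bit m \<noteq> 0 of the imagined position.\<close>

definition bit_update :: "nat \<Rightarrow> nat \<Rightarrow> (omega \<Rightarrow> omega) edge \<Rightarrow> nat" where
  "bit_update B m e = of_bool (snd (col e (top_rung B (src e) (m \<noteq> 0))))"

definition bit_strategy :: "nat \<Rightarrow> (omega \<Rightarrow> omega) strategy" where
  "bit_strategy B v es = safe_move B (last_node v es) (foldl (bit_update B) 0 es \<noteq> 0)"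

lemma bit_strategy_wins:
  assumes start: "(u, (0, False)) \<in> Safe B"
  shows "winning_from A RL (bit_strategy B) u"
  unfolding winning_from_def
proof (intro allI impI, elim conjE)
  fix p assume play: "ipath A u p" and cons: "consistent A (bit_strategy B) u p"
  define bit where "bit i = (foldl (bit_update B) 0 (map p [0..<i]) \<noteq> 0)" for i
  define pos where "pos i = ladder_pos (map p [0..<i])" for i
  have inv: "(src (p i), top_rung B (src (p i)) (bit i)) \<in> Safe B \<and>
    omega_le (pos i) (top_rung B (src (p i)) (bit i))" for i
  proof (induction i)
    case 0
    have "src (p 0) = u" using play by (simp add: ipath_def)
    then show ?case using top_rung_dominates[OF start] by (simp add: bit_def pos_def ladder_pos_def)
  next
    case (Suc i)
    define e where "e = p i"
    define v where "v = src e"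
    define y where "y = col e (top_rung B v (bit i))"
    have e: "e \<in> Ed A" "src (p (Suc i)) = tgt e" using play by (auto simp: ipath_def e_def)
    have IH: "(v, top_rung B v (bit i)) \<in> Safe B" "omega_le (pos i) (top_rung B v (bit i))"
      using Suc.IH by (simp_all add: v_def e_def)
    have "(tgt e, y) \<in> Safe B"
    proof (cases "v \<in> VP A")
      case True
      have "e = bit_strategy B u (map p [0..<i])"
        using cons True by (simp add: consistent_def e_def v_def)
      also have "\<dots> = safe_move B v (bit i)"
        using ipath_prefix[OF arena play, of i] by (simp add: bit_strategy_def bit_def e_def v_def)
      finally show ?thesis using safe_move_Safe[OF True IH(1)] by (simp add: y_def)
    next
      case False
      then have "v \<in> VA A" using edge_props[OF e(1)] by (simp add: Vs_def v_def)
      then show ?thesis using safe_Safe[of B] IH(1) e(1) unfolding safe_def y_def v_def by blast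
    qed
    moreover have "bit (Suc i) = snd y"
      by (simp add: bit_def bit_update_def y_def e_def v_def)
    moreover have "omega_le (pos (Suc i)) y"
      using monoM_D edge_props[OF e(1)] IH(2) by (simp add: pos_def y_def e_def)
    ultimately show ?case
      using top_rung_dominates[of "tgt e" "fst y" "snd y" B] e(2) omega_le_trans by auto
  qed
  have "fst (pos i) \<le> B" for i
    using inv[of i] Safe_bound omega_le_fst by (metis le_trans prod.collapse)
  moreover have "\<forall>i. col (p i) \<in> monoM" using play edge_props by (auto simp: ipath_def)
  ultimately show "(\<lambda>i. col (p i)) \<in> RL"
    by (auto simp: RL_iff_bounded comp_pref_eq_ladder_pos pos_def)
qed

end

lemma has_mem_optimal_RL_2: "has_mem_optimal monoM RL 2"
  unfolding has_mem_optimal_def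
proof (intro allI impI)
  fix A :: "(omega \<Rightarrow> omega) arena"
  assume "is_arena monoM A"
  then interpret monotone_arena A by unfold_locales
  obtain B where B: "\<And>u S. u \<in> Vs A \<Longrightarrow> is_strategy A S \<Longrightarrow> winning_from A RL S u \<Longrightarrow>
    (u, (0, False)) \<in> Safe B"
    using uniform_Safe_bound by blast
  have "optimal A RL (bit_strategy B)"
    using B bit_strategy_wins by (auto simp: optimal_def)
  moreover have "memory_structure A 2 0 (bit_update B)"
    by (simp add: memory_structure_def bit_update_def)
  moreover have "is_strategy A (bit_strategy B)"
    using safe_move_edge by (auto simp: is_strategy_def bit_strategy_def Vs_def)
  moreover have "built_on A 0 (bit_update B) (bit_strategy B)"
    by (auto simp: built_on_def bit_strategy_def)
  ultimately show "\<exists>m0 \<delta> S. memory_structure A 2 m0 \<delta> \<and> is_strategy A S \<and>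
    built_on A m0 \<delta> S \<and> optimal A RL S"
    by blast
qed

section \<open>One memory state does not suffice\<close>

lemma foldl_one_state_memory:
  assumes "memory_structure A 1 m0 \<delta>" "set es \<subseteq> Ed A"
  shows "foldl \<delta> m0 es = m0"
proof -
  have "m0 = 0" and "\<And>e. e \<in> Ed A \<Longrightarrow> \<delta> 0 e = 0"
    using assms(1) by (auto simp: memory_structure_def)
  then show ?thesis using assms(2) by (induction es) auto
qed

lemma one_state_memory_positional:
  assumes "memory_structure A 1 m0 \<delta>" "built_on A m0 \<delta> S"
    and "fpath A v1 es1" "fpath A v2 es2" "last_node v1 es1 = last_node v2 es2"
    and "last_node v1 es1 \<in> VP A"
  shows "S v1 es1 = S v2 es2"
  using assms foldl_one_state_memory[OF assms(1)] unfolding built_on_def fpath_def by metis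

definition write_bit :: "bool \<Rightarrow> omega \<Rightarrow> omega" where
  "write_bit b x = (fst x, b)"

definition guess_bit :: "bool \<Rightarrow> omega \<Rightarrow> omega" where
  "guess_bit b x = (if snd x = b then x else (Suc (fst x), b))"

definition write_edge :: "bool \<Rightarrow> (omega \<Rightarrow> omega) edge" where
  "write_edge b = (0, write_bit b, 1)"

definition guess_edge :: "bool \<Rightarrow> (omega \<Rightarrow> omega) edge" where
  "guess_edge b = (1, guess_bit b, 0)"

definition bit_arena :: "(omega \<Rightarrow> omega) arena" where
  "bit_arena = ({1}, {0}, range write_edge \<union> range guess_edge)"

lemma bit_edges_simps [simp]:
  "src (write_edge b) = 0" "tgt (write_edge b) = 1" "col (write_edge b) = write_bit b"
  "src (guess_edge b) = 1" "tgt (guess_edge b) = 0" "col (guess_edge b) = guess_bit b"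
  by (simp_all add: write_edge_def guess_edge_def src_def tgt_def col_def)

lemma bit_arena_simps [simp]:
  "VP bit_arena = {1}" "VA bit_arena = {0}" "Vs bit_arena = {0, 1}"
  "Ed bit_arena = range write_edge \<union> range guess_edge"
  by (auto simp: bit_arena_def VP_def VA_def Vs_def Ed_def)

lemma write_bit_mono: "write_bit b \<in> monoM"
  by (auto simp: monoM_def omega_le_def write_bit_def)

lemma guess_bit_mono: "guess_bit b \<in> monoM"
  by (auto simp: monoM_def omega_le_def guess_bit_def)

lemma bit_arena_edge_cases:
  assumes "e \<in> Ed bit_arena"
  obtains b where "e = write_edge b" "src e = 0" | b where "e = guess_edge b" "src e = 1"
  using assms by auto

lemma is_arena_bit_arena: "is_arena monoM bit_arena"
proof -
  have "write_edge False \<in> Ed bit_arena" "guess_edge False \<in> Ed bit_arena" by auto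
  then have "\<forall>v\<in>Vs bit_arena. \<exists>e\<in>Ed bit_arena. src e = v" by force
  moreover have "Ed bit_arena \<subseteq> Vs bit_arena \<times> monoM \<times> Vs bit_arena"
    using write_bit_mono guess_bit_mono by (auto simp: write_edge_def guess_edge_def)
  ultimately show ?thesis by (simp add: is_arena_def)
qed

definition copy_bit :: "(omega \<Rightarrow> omega) strategy" where
  "copy_bit v es = guess_edge (snd (ladder_pos es))"

lemma copy_bit_strategy: "is_strategy bit_arena copy_bit"
  by (simp add: is_strategy_def copy_bit_def)

lemma copy_bit_wins: "winning_from bit_arena RL copy_bit 0"
  unfolding winning_from_def
proof (intro allI impI, elim conjE)
  fix p assume play: "ipath bit_arena 0 p" and cons: "consistent bit_arena copy_bit 0 p"
  have edge: "p i \<in> Ed bit_arena" for i using play by (simp add: ipath_def)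
  have "fst (ladder_pos (map p [0..<n])) = 0" for n
  proof (induction n)
    case (Suc n)
    from edge[of n] show ?case
    proof (cases rule: bit_arena_edge_cases)
      case 2
      then have "p n = guess_edge (snd (ladder_pos (map p [0..<n])))"
        using cons by (simp add: consistent_def copy_bit_def)
      then show ?thesis using Suc by (simp add: guess_bit_def)
    qed (use Suc in \<open>simp add: write_bit_def\<close>)
  qed (simp add: ladder_pos_def)
  moreover have "col (p i) \<in> monoM" for i
    using edge[of i] write_bit_mono guess_bit_mono by auto
  ultimately show "(\<lambda>i. col (p i)) \<in> RL"
    by (auto simp: RL_iff_bounded comp_pref_eq_ladder_pos)
qed

lemma not_has_mem_optimal_RL_1: "\<not> has_mem_optimal monoM RL 1"
proof
  assume "has_mem_optimal monoM RL 1"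
  then obtain m0 \<delta> S where mem: "memory_structure bit_arena 1 m0 \<delta>"
    and strat: "is_strategy bit_arena S" and built: "built_on bit_arena m0 \<delta> S"
    and opt: "optimal bit_arena RL S"
    using is_arena_bit_arena unfolding has_mem_optimal_def by blast
  have win: "winning_from bit_arena RL S 0"
    using opt copy_bit_strategy copy_bit_wins unfolding optimal_def by auto
  have "S 1 [] \<in> Ed bit_arena" "src (S 1 []) = 1"
    using strat unfolding is_strategy_def by (auto simp: fpath_def)
  then obtain b where b: "S 1 [] = guess_edge b"
    by (auto elim: bit_arena_edge_cases)
  define p where "p (i :: nat) = (if even i then write_edge (\<not> b) else guess_edge b)" for i
  have play: "ipath bit_arena 0 p"
    by (auto simp: ipath_def p_def)
  have "consistent bit_arena S 0 p"
    unfolding consistent_def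
  proof (intro allI impI)
    fix i assume "src (p i) \<in> VP bit_arena"
    then have "odd i" by (auto simp: p_def split: if_splits)
    have "S 0 (map p [0..<i]) = S 1 []"
      using ipath_prefix[OF is_arena_bit_arena play, of i] \<open>odd i\<close>
      by (intro one_state_memory_positional[OF mem built]) (auto simp: fpath_def p_def)
    then show "p i = S 0 (map p [0..<i])" using \<open>odd i\<close> b by (simp add: p_def)
  qed
  then have "(\<lambda>i. col (p i)) \<in> RL"
    using win play by (simp add: winning_from_def)
  then obtain N where N: "fst (ladder_pos (map p [0..<n])) \<le> N" for n
    by (auto simp: RL_iff_bounded comp_pref_eq_ladder_pos)
  have "fst (ladder_pos (map p [0..<2 * k])) = k" for k
    by (induction k) (auto simp: p_def ladder_pos_def write_bit_def guess_bit_def)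
  then show False using N[of "2 * Suc N"] by (metis Suc_n_not_le_n)
qed

lemma GenMem_eqI:
  assumes "1 \<le> k" "has_mem_optimal C W k" "\<And>j. 1 \<le> j \<Longrightarrow> j < k \<Longrightarrow> \<not> has_mem_optimal C W j"
  shows "GenMem C W = enat k"
proof -
  have "(LEAST j. 1 \<le> j \<and> has_mem_optimal C W j) = k"
    using assms by (intro Least_equality) (auto simp: not_less[symmetric])
  then show ?thesis using assms(1,2) by (auto simp: GenMem_def)
qed

theorem proposition1:
  shows "GenMem monoM RL = 2"
proof -
  have "GenMem monoM RL = enat 2"
  proof (rule GenMem_eqI)
    show "has_mem_optimal monoM RL 2" by (rule has_mem_optimal_RL_2)
    show "\<not> has_mem_optimal monoM RL j" if "1 \<le> j" "j < 2" for j
    proof -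
      have "j = 1" using that by simp
      then show ?thesis using not_has_mem_optimal_RL_1 by simp
    qed
  qed simp
  then show ?thesis by (simp add: numeral_eq_enat)
qed

end
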